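(* Let $p\equiv 1\pmod 8$ be prime and write $p=s^2+t^2$ with integers $s\equiv 1\pmod 4$ and $t>0$. Let $g$ be a generator of $\mathbb{Z}_p^\ast$, put $G_j=\{g^{4k+j}:k\in\mathbb{Z}\}$ ($j=0,1,2,3$), and assume $g$ is chosen so that $\#\{b\in G_0:b+1\in G_1\}>\#\{b\in G_0:b+1\in G_3\}$. Let \[a=\frac{1-\sqrt{1+t^2}}{t}+i\,\frac{\sqrt{-2+2\sqrt{1+t^2}}}{t},\qquad (c_0,c_1,c_2,c_3)=(a,-a,\overline a,-\overline a)\] (or any cyclic permutation of this quadruple), and define $x=(x_k)_{k\in\mathbb{Z}_p}$ by $x_k=c_j$ for $k\in G_j$ and $x_0=-\frac{p-1}{4}(c_0+c_1+c_2+c_3)-1$. Then the $(p+1)\times(p+1)$ matrix whose first row and first column consist of $1$'s and whose lower right $p\times p$ block is $\mathrm{Circ}(x)$ is a complex Hadamard matrix.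
   Context: $\mathrm{Circ}(x)$ is the $p\times p$ matrix with $(i,j)$ entry $x_{j-i}$, indices modulo $p$. A complex Hadamard matrix of order $n$ is an $n\times n$ complex matrix with all entries of modulus $1$ satisfying $HH^\ast=nI_n$. *)

theory Defs
  imports "HOL-Analysis.Analysis" "HOL-Number_Theory.Number_Theory"
begin

text \<open>Matrices of order n are represented as functions nat => nat => complex,
  only the entries with indices below n being relevant.\<close>

definition complex_hadamard :: "nat \<Rightarrow> (nat \<Rightarrow> nat \<Rightarrow> complex) \<Rightarrow> bool" where
  "complex_hadamard n H \<longleftrightarrow>
     (\<forall>i<n. \<forall>j<n. norm (H i j) = 1) \<and>
     (\<forall>i<n. \<forall>j<n. (\<Sum>k<n. H i k * cnj (H j k)) = (if i = j then of_nat n else 0))"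

definition circ :: "nat \<Rightarrow> (nat \<Rightarrow> complex) \<Rightarrow> nat \<Rightarrow> nat \<Rightarrow> complex" where
  "circ p x i j = x ((j + p - i) mod p)"

definition bordered_circ :: "nat \<Rightarrow> (nat \<Rightarrow> complex) \<Rightarrow> nat \<Rightarrow> nat \<Rightarrow> complex" where
  "bordered_circ p x i j = (if i = 0 \<or> j = 0 then 1 else circ p x (i - 1) (j - 1))"

definition cyc_class :: "nat \<Rightarrow> nat \<Rightarrow> nat \<Rightarrow> nat set" where
  "cyc_class p g j = {(g ^ (4 * k + j)) mod p | k. True}"

end

theory Submission
  imports Defs
begin

(*
  The bordered matrix [1 1; 1 Circ(x)] with unimodular x is a complex
  Hadamard matrix as soon as x sums to -1 and all periodic autocorrelations of x at nonzero
  shifts equal -1 (bordered_circ_hadamard).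

  The sequence x is constant on the quartic cyclotomic classes G_j (with value c_j) and
  x_0 = -1.  Its autocorrelation at a shift d is therefore a combination of the cyclotomic
  numbers (i, j) = #{u : u in G_i, u + 1 in G_j} of order 4 (autocorrelation_cyclo).  The
  classical symmetries of these numbers reduce them to five unknowns A, ..., E tied by three
  row relations (cyclo_table, cyclo_rows), and the remaining freedom is measured by the
  imaginary part 2 (B - D) of the Jacobi sum J of the quartic character.  Since |J|^2 = p
  (jacobi_norm), uniqueness of the decomposition of p into two squares, parity and the sign
  hypothesis give 2 (B - D) = t (jacobi_im_eq).  Finally a was chosen with |a| = 1 and
  t (a - conj a)^2 = 4 (a + conj a) (special_unit_properties), which makes every
  autocorrelation collapse to -1 (quartic_autocorrelation_identity, perfect_autocorrelation).
*)

lemma sum_lessThan_4: "(\<Sum>i<4::nat. F i) = F 0 + F 1 + F 2 + F 3"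
  by (simp add: eval_nat_numeral)

lemma less_4_cases: "(n::nat) < 4 \<Longrightarrow> n = 0 \<or> n = 1 \<or> n = 2 \<or> n = 3"
  by arith

lemma unimodular_mult_cnj: "norm z = 1 \<Longrightarrow> z * cnj z = 1"
  using complex_norm_square[of z] by simp

lemma sum_affine_reindex_mod:
  fixes p a b :: nat
  assumes "0 < p" and "coprime a p"
  shows "(\<Sum>u<p. F ((a * u + b) mod p)) = (\<Sum>u<p. F u)"
proof -
  let ?h = "\<lambda>u. (a * u + b) mod p"
  have "inj_on ?h {..<p}"
  proof
    fix u v assume "u \<in> {..<p}" "v \<in> {..<p}" and "?h u = ?h v"
    then have "[a * u + b = a * v + b] (mod p)" by (simp add: cong_def)
    then have "[a * u = a * v] (mod p)" by (simp add: cong_add_rcancel_nat)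
    then have "[u = v] (mod p)" using assms(2) by (simp add: cong_mult_lcancel_nat)
    then show "u = v" using \<open>u \<in> {..<p}\<close> \<open>v \<in> {..<p}\<close> by (simp add: cong_def)
  qed
  moreover have "?h ` {..<p} = {..<p}"
    using \<open>inj_on ?h {..<p}\<close> by (intro endo_inj_surj) (use assms(1) in auto)
  ultimately show ?thesis using sum.reindex[of ?h "{..<p}" F] by simp
qed

lemma circ_row_inner:
  fixes x :: "nat \<Rightarrow> complex"
  assumes "i < p" and "j < p"
  shows "(\<Sum>k<p. circ p x i k * cnj (circ p x j k))
       = (\<Sum>k<p. x ((k + (j + p - i) mod p) mod p) * cnj (x k))"
proof -
  have "(\<Sum>k<p. circ p x i k * cnj (circ p x j k))
      = (\<Sum>k<p. circ p x i ((1 * k + j) mod p) * cnj (circ p x j ((1 * k + j) mod p)))"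
    using sum_affine_reindex_mod[where a = 1 and b = j and p = p
        and F = "\<lambda>k. circ p x i k * cnj (circ p x j k)"] assms by simp
  also have "\<dots> = (\<Sum>k<p. x ((k + (j + p - i) mod p) mod p) * cnj (x k))"
  proof (intro sum.cong refl)
    fix k assume "k \<in> {..<p}"
    have "((k + j) mod p + p - i) mod p = ((k + j) mod p + (p - i)) mod p"
      using assms(1) by simp
    also have "\<dots> = (k + (j + (p - i))) mod p" by (simp add: mod_add_left_eq add.assoc)
    also have "\<dots> = (k + (j + p - i) mod p) mod p"
      using assms(1) by (simp add: mod_add_right_eq)
    finally have row_i: "((k + j) mod p + p - i) mod p = (k + (j + p - i) mod p) mod p" .
    have "((k + j) mod p + p - j) mod p = ((k + j) mod p + (p - j)) mod p"
      using assms(2) by simp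
    also have "\<dots> = (k + j + (p - j)) mod p" by (rule mod_add_left_eq)
    also have "k + j + (p - j) = k + p" using assms(2) by simp
    also have "(k + p) mod p = k" using \<open>k \<in> {..<p}\<close> by simp
    finally have row_j: "((k + j) mod p + p - j) mod p = k" .
    show "circ p x i ((1 * k + j) mod p) * cnj (circ p x j ((1 * k + j) mod p))
        = x ((k + (j + p - i) mod p) mod p) * cnj (x k)"
      using row_i row_j by (simp add: circ_def)
  qed
  finally show ?thesis .
qed

(* A bordered circulant matrix with unimodular x is a complex Hadamard matrix as soon as
   x sums to -1 and all periodic autocorrelations at nonzero shifts equal -1:
   the border row is then orthogonal to the others and the circulant rows are mutually
   orthogonal after adding the contribution 1 of the border column. *)
lemma bordered_circ_hadamard:
  fixes x :: "nat \<Rightarrow> complex"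
  assumes p: "0 < p"
    and unimodular: "\<And>k. k < p \<Longrightarrow> norm (x k) = 1"
    and sum_x: "(\<Sum>k<p. x k) = -1"
    and autocorr: "\<And>d. 0 < d \<Longrightarrow> d < p \<Longrightarrow> (\<Sum>k<p. x ((k + d) mod p) * cnj (x k)) = -1"
  shows "complex_hadamard (p + 1) (bordered_circ p x)"
proof -
  have column_sum: "(\<Sum>k<p. circ p x i k) = -1" if "i < p" for i
  proof -
    have "(\<Sum>k<p. circ p x i k) = (\<Sum>k<p. x ((1 * k + (p - i)) mod p))"
      using that by (simp add: circ_def)
    also have "\<dots> = -1" using sum_affine_reindex_mod[of p 1 x] p sum_x by simp
    finally show ?thesis .
  qed
  have circ_inner: "(\<Sum>k<p. circ p x i k * cnj (circ p x j k)) = (if i = j then of_nat p else -1)"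
    if "i < p" "j < p" for i j
  proof (cases "i = j")
    case True
    have "circ p x i k * cnj (circ p x i k) = 1" if "k < p" for k
      using unimodular_mult_cnj unimodular p by (simp add: circ_def)
    then show ?thesis using True by simp
  next
    case False
    then have "0 < (j + p - i) mod p" "(j + p - i) mod p < p"
      using that by (auto simp: mod_if)
    then show ?thesis using False circ_row_inner[OF that, of x] autocorr by simp
  qed
  have entry: "bordered_circ p x i (Suc k) = (if i = 0 then 1 else circ p x (i - 1) k)" for i k
    by (simp add: bordered_circ_def)
  have border: "(\<Sum>k<p + 1. bordered_circ p x i k * cnj (bordered_circ p x j k))
      = 1 + (\<Sum>k<p. bordered_circ p x i (Suc k) * cnj (bordered_circ p x j (Suc k)))" for i j
    by (simp only: Suc_eq_plus1 [symmetric] sum.lessThan_Suc_shift) (simp add: bordered_circ_def)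
  show ?thesis
    unfolding complex_hadamard_def
  proof (intro conjI allI impI)
    fix i j assume "i < p + 1" "j < p + 1"
    then show "norm (bordered_circ p x i j) = 1"
      using unimodular p by (simp add: bordered_circ_def circ_def)
  next
    fix i j assume i: "i < p + 1" and j: "j < p + 1"
    consider "i = 0" "j = 0" | "i = 0" "j \<noteq> 0" | "i \<noteq> 0" "j = 0" | "i \<noteq> 0" "j \<noteq> 0"
      by blast
    then show "(\<Sum>k<p + 1. bordered_circ p x i k * cnj (bordered_circ p x j k))
        = (if i = j then of_nat (p + 1) else 0)"
    proof cases
      case 1
      then show ?thesis unfolding border entry by simp
    next
      case 2
      then show ?thesis unfolding border entry
        using j column_sum[of "j - 1"] by (simp add: cnj_sum [symmetric])
    next
      case 3
      then show ?thesis unfolding border entry using i column_sum[of "i - 1"] by simp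
    next
      case 4
      then show ?thesis unfolding border entry using i j circ_inner[of "i - 1" "j - 1"] by auto
    qed
  qed
qed

lemma sum_two_squares_proportional:
  fixes a b c d P :: int
  assumes "P \<noteq> 0" and "a^2 + b^2 = P" and "c^2 + d^2 = P" and "a^2 * d^2 = b^2 * c^2"
  shows "a^2 = c^2"
proof -
  have "a^2 * P = a^2 * c^2 + b^2 * c^2"
    using assms(3,4) by (simp add: algebra_simps flip: assms(3))
  also have "\<dots> = c^2 * P" using assms(2) by (simp add: algebra_simps flip: assms(2))
  finally show ?thesis using assms(1) by simp
qed

lemma sum_squares_eq_square_dvd:
  fixes u v P :: int
  assumes "P \<noteq> 0" and "u^2 + v^2 = P^2" and "P dvd v"
  shows "u = 0 \<or> v = 0"
proof -
  obtain k where v: "v = P * k" using assms(3) by (auto elim: dvdE)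
  have uk: "u^2 + P^2 * k^2 = P^2" using assms(2) by (simp add: v power_mult_distrib)
  then have "P^2 * k^2 \<le> P^2 * 1" using zero_le_power2[of u] by linarith
  then have "k^2 \<le> 1" using assms(1) by (simp add: mult_le_cancel_left)
  then have "k = 0 \<or> k^2 = 1" using abs_square_le_1[of k] abs_square_eq_1[of k] by auto
  then show ?thesis using uk v by auto
qed

lemma prime_sum_two_squares_unique:
  fixes a b c d P :: int
  assumes "prime P" and ab: "a^2 + b^2 = P" and cd: "c^2 + d^2 = P"
  shows "a^2 = c^2 \<or> a^2 = d^2"
proof -
  have P: "P \<noteq> 0" using assms(1) by auto
  have "(a*d - b*c) * (a*d + b*c) = a^2 * (c^2 + d^2) - c^2 * (a^2 + b^2)"
    by (simp add: power2_eq_square algebra_simps)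
  also have "\<dots> = P * (a^2 - c^2)" using ab cd by (simp add: algebra_simps)
  finally have "P dvd a*d - b*c \<or> P dvd a*d + b*c"
    using assms(1) by (metis dvd_triv_left prime_dvd_mult_iff)
  moreover have "(a*c + b*d)^2 + (a*d - b*c)^2 = (a^2 + b^2) * (c^2 + d^2)"
    and "(a*c - b*d)^2 + (a*d + b*c)^2 = (a^2 + b^2) * (c^2 + d^2)"
    by (simp_all add: power2_eq_square algebra_simps)
  then have "(a*c + b*d)^2 + (a*d - b*c)^2 = P^2" "(a*c - b*d)^2 + (a*d + b*c)^2 = P^2"
    using ab cd by (simp_all add: power2_eq_square)
  ultimately have "a*c + b*d = 0 \<or> a*d - b*c = 0 \<or> a*c - b*d = 0 \<or> a*d + b*c = 0"
    using sum_squares_eq_square_dvd[OF P] by blast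
  then have "(a*d)^2 = (b*c)^2 \<or> (a*c)^2 = (b*d)^2"
    by (elim disjE) (simp_all add: add_eq_0_iff2 power2_eq_square)
  then show ?thesis
    using sum_two_squares_proportional[OF P ab cd] sum_two_squares_proportional[OF P ab, of d c] cd
    by (auto simp: power_mult_distrib add.commute)
qed

(* The number a of the theorem is unimodular and satisfies t (a - conj a)^2 = 4 (a + conj a);
   these two facts are all that is used about a. *)
lemma special_unit_properties:
  fixes t :: int and a :: complex
  assumes t: "t > 0"
    and a: "a = Complex ((1 - sqrt (1 + (real_of_int t)^2)) / real_of_int t)
                     (sqrt (-2 + 2 * sqrt (1 + (real_of_int t)^2)) / real_of_int t)"
  shows "norm a = 1" and "of_int t * (a - cnj a)^2 = 4 * (a + cnj a)"
proof -
  define T where "T = real_of_int t"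
  define S where "S = sqrt (1 + T^2)"
  define \<alpha> where "\<alpha> = (1 - S) / T"
  define \<beta> where "\<beta> = sqrt (-2 + 2 * S) / T"
  have a_eq: "a = Complex \<alpha> \<beta>" using a by (simp add: \<alpha>_def \<beta>_def S_def T_def)
  have T: "T > 0" using t by (simp add: T_def)
  have S: "1 \<le> S" "S^2 = 1 + T^2" unfolding S_def by (simp_all add: real_le_rsqrt)
  have \<beta>2: "\<beta>^2 = (-2 + 2 * S) / T^2" using S by (simp add: \<beta>_def power_divide)
  have \<alpha>2: "\<alpha>^2 = (1 - 2 * S + S^2) / T^2"
    by (simp add: \<alpha>_def power_divide power2_eq_square algebra_simps)
  have "\<alpha>^2 + \<beta>^2 = 1" using T unfolding \<alpha>2 \<beta>2 S(2) by (simp add: field_simps)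
  then show "norm a = 1" by (simp add: a_eq complex_norm)
  have "- (4 * T * \<beta>^2) = 8 * \<alpha>"
    using T unfolding \<beta>2 by (simp add: \<alpha>_def field_simps power2_eq_square)
  then show "of_int t * (a - cnj a)^2 = 4 * (a + cnj a)"
    by (simp add: a_eq complex_eq_iff power2_eq_square T_def)
qed

(* The table of the cyclotomic numbers of order 4 when (p - 1)/4 is even, in the
   classical notation A, B, C, D, E of Gauss and Dickson. *)
definition cyclotomic_table4 :: "'a \<Rightarrow> 'a \<Rightarrow> 'a \<Rightarrow> 'a \<Rightarrow> 'a \<Rightarrow> nat \<Rightarrow> nat \<Rightarrow> 'a" where
  "cyclotomic_table4 A B C D E i j = [[A, B, C, D], [B, D, E, E], [C, E, C, E], [D, E, E, B]] ! i ! j"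

lemma cyclotomic_table4_map:
  assumes "i < 4" and "j < 4"
  shows "h (cyclotomic_table4 A B C D E i j) = cyclotomic_table4 (h A) (h B) (h C) (h D) (h E) i j"
  using less_4_cases[OF assms(1)] less_4_cases[OF assms(2)]
  by (auto simp: cyclotomic_table4_def)

lemma quartic_autocorrelation_identity:
  fixes a t f A B C D E :: complex and c :: "nat \<Rightarrow> complex"
  assumes row0: "A + B + C + D + 1 = f" and row1: "B + D + 2 * E = f" and row2: "2 * C + 2 * E = f"
    and t: "2 * (B - D) = t"
    and unit: "a * cnj a = 1" and a_eq: "t * (a - cnj a)^2 = 4 * (a + cnj a)"
    and c: "\<And>j. c j = [a, -a, cnj a, -cnj a] ! ((j + r) mod 4)"
  shows "- c m - cnj (c m) + (\<Sum>i<4. \<Sum>j<4. cyclotomic_table4 A B C D E i j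
            * (c ((m + j) mod 4) * cnj (c ((m + i) mod 4)))) = -1" (is "?L = -1")
proof -
  define \<sigma> where "\<sigma> = (m + r) mod 4"
  have c_shift: "c ((m + k) mod 4) = [a, -a, cnj a, -cnj a] ! ((\<sigma> + k) mod 4)" for k
    unfolding c \<sigma>_def by (simp add: mod_simps add_ac)
  have c_m: "c m = [a, -a, cnj a, -cnj a] ! \<sigma>" unfolding c \<sigma>_def ..
  have a0: "a \<noteq> 0" using unit by auto
  then have cnj_a: "cnj a = 1 / a" using unit by (simp add: field_simps)
  have B: "B = D + t/2" using t by (simp add: field_simps)
  have "2 * C = B + D" using row1 row2 by (metis add_right_cancel)
  then have C: "C = D + t/4" unfolding B by (simp add: field_simps)
  have "E = f/2 - C" by (simp add: field_simps flip: row2)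
  then have E: "E = f/2 - D - t/4" unfolding C by simp
  have "A = f - 1 - B - C - D" by (simp flip: row0)
  also have "\<dots> = f - 1 - 3 * D - 3 * t / 4" unfolding B C by (simp add: field_simps)
  finally have A: "A = f - 1 - 3 * D - 3 * t / 4" .
  (* After eliminating A, B, C, E the expression is \<plusminus> \<Phi> - 1, and \<Phi> = 0 is the defining
     relation of a rewritten with conj a = 1/a. *)
  define \<Phi> where "\<Phi> = (t/4) * (a^2 + (1/a)^2 - 2) - (a + 1/a)"
  have "\<Phi> = 0"
  proof -
    have "a^2 + (1/a)^2 - 2 = (a - 1/a)^2" using a0 by (simp add: power2_eq_square field_simps)
    then show ?thesis using a_eq by (simp add: \<Phi>_def cnj_a)
  qed
  have nth_quad: "[a, -a, cnj a, -cnj a] ! 0 = a" "[a, -a, cnj a, -cnj a] ! 1 = -a"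
    "[a, -a, cnj a, -cnj a] ! 2 = cnj a" "[a, -a, cnj a, -cnj a] ! 3 = -cnj a"
    by (simp_all add: eval_nat_numeral)
  have "\<sigma> < 4" by (simp add: \<sigma>_def)
  then consider "\<sigma> = 0" | "\<sigma> = 1" | "\<sigma> = 2" | "\<sigma> = 3" using less_4_cases by blast
  then have "?L + 1 = (if even \<sigma> then \<Phi> else - \<Phi>)"
    unfolding sum_lessThan_4 c_shift c_m cyclotomic_table4_def A B C E \<Phi>_def
    by cases (simp add: nth_quad cnj_a; simp add: field_simps power2_eq_square a0)+
  then show ?thesis using \<open>\<Phi> = 0\<close> by (auto simp: eq_neg_iff_add_eq_0 split: if_splits)
qed

lemma quadruple_properties:
  fixes a :: complex and c :: "nat \<Rightarrow> complex"
  assumes c: "\<And>j. c j = [a, -a, cnj a, -cnj a] ! ((j + r) mod 4)"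
  shows "norm a = 1 \<Longrightarrow> norm (c j) = 1" and "(\<Sum>j<4. c j) = 0"
proof -
  have nth: "[a, -a, cnj a, -cnj a] ! 0 = a" "[a, -a, cnj a, -cnj a] ! 1 = -a"
    "[a, -a, cnj a, -cnj a] ! 2 = cnj a" "[a, -a, cnj a, -cnj a] ! 3 = -cnj a"
    by (simp_all add: eval_nat_numeral)
  have "(j + r) mod 4 < 4" by simp
  then show "norm a = 1 \<Longrightarrow> norm (c j) = 1"
    unfolding c by (elim less_4_cases[elim_format] disjE) (simp_all add: nth)
  define \<rho> where "\<rho> = r mod 4"
  have c_\<rho>: "c j = [a, -a, cnj a, -cnj a] ! ((j + \<rho>) mod 4)" for j
    unfolding c \<rho>_def by (simp add: mod_simps)
  have "\<rho> < 4" by (simp add: \<rho>_def)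
  then show "(\<Sum>j<4. c j) = 0"
    unfolding c_\<rho> sum_lessThan_4 by (elim less_4_cases[elim_format] disjE) (simp_all add: nth)
qed

lemma sum_group_pairs4:
  fixes G :: "nat \<Rightarrow> nat \<Rightarrow> 'a::comm_semiring_1"
  assumes "finite S" and "\<And>u. u \<in> S \<Longrightarrow> lbl u < 4 \<and> lbl' u < 4"
  shows "(\<Sum>u\<in>S. G (lbl u) (lbl' u))
       = (\<Sum>i<4. \<Sum>j<4. of_nat (card {u \<in> S. lbl u = i \<and> lbl' u = j}) * G i j)"
proof -
  have "(\<Sum>u\<in>S. G (lbl u) (lbl' u))
      = (\<Sum>y\<in>{..<4}\<times>{..<4}. \<Sum>u\<in>{u \<in> S. (lbl u, lbl' u) = y}. G (lbl u) (lbl' u))"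
    by (rule sum.group [symmetric]) (use assms in auto)
  also have "\<dots> = (\<Sum>y\<in>{..<4}\<times>{..<4}.
      of_nat (card {u \<in> S. lbl u = fst y \<and> lbl' u = snd y}) * G (fst y) (snd y))"
  proof (intro sum.cong refl)
    fix y :: "nat \<times> nat"
    have "{u \<in> S. (lbl u, lbl' u) = y} = {u \<in> S. lbl u = fst y \<and> lbl' u = snd y}" by (cases y) auto
    then show "(\<Sum>u\<in>{u \<in> S. (lbl u, lbl' u) = y}. G (lbl u) (lbl' u))
        = of_nat (card {u \<in> S. lbl u = fst y \<and> lbl' u = snd y}) * G (fst y) (snd y)"
      by simp
  qed
  also have "\<dots> = (\<Sum>i<4. \<Sum>j<4. of_nat (card {u \<in> S. lbl u = i \<and> lbl' u = j}) * G i j)"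
    by (simp add: sum.cartesian_product split_def)
  finally show ?thesis .
qed

(* Throughout, p is a prime with p \<equiv> 1 (mod 8) and g a primitive root modulo p;
   residues are represented by natural numbers and only their values mod p matter. *)
locale quartic_residues =
  fixes p g :: nat
  assumes prime: "prime p" and p_mod_8: "p mod 8 = 1" and primroot: "residue_primroot p g"
begin

lemma p_gt_2: "p > 2"
  using prime p_mod_8 prime_gt_1_nat[OF prime] by (cases "p = 2") auto

lemma eight_dvd: "8 dvd p - 1"
  using p_mod_8 by presburger

lemma four_dvd: "4 dvd p - 1"
  using p_mod_8 by presburger

lemma nonzero_mod_mult: "u mod p \<noteq> 0 \<Longrightarrow> v mod p \<noteq> 0 \<Longrightarrow> (u * v) mod p \<noteq> 0"
  using prime by (simp add: prime_dvd_mult_iff flip: dvd_eq_mod_eq_0)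

lemma coprime_if_nonzero_mod: "u mod p \<noteq> 0 \<Longrightarrow> coprime u p"
  using prime by (metis dvd_eq_mod_eq_0 prime_imp_coprime coprime_commute)

lemma sum_affine_reindex:
  "a mod p \<noteq> 0 \<Longrightarrow> (\<Sum>u<p. F ((a * u + b) mod p)) = (\<Sum>u<p. F u)"
  using sum_affine_reindex_mod[where p = p and a = a and F = F and b = b]
    coprime_if_nonzero_mod p_gt_2 by simp

lemma generator_bij: "bij_betw (\<lambda>i. g ^ i mod p) {..<p-1} {0<..<p}"
  using residue_primroot_is_generator[OF _ primroot] p_gt_2 totient_prime[OF prime]
    totatives_prime[OF prime]
  by auto

lemma power_g_mod: "g ^ k mod p = g ^ (k mod (p - 1)) mod p"
proof -
  have "[g ^ (p - 1) = 1] (mod p)"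
    using euler_theorem[of g p] primroot prime
    by (simp add: residue_primroot_def coprime_commute totient_prime)
  then have "[(g ^ (p - 1)) ^ (k div (p - 1)) = 1] (mod p)"
    using cong_pow by fastforce
  then have "[(g ^ (p - 1)) ^ (k div (p - 1)) * g ^ (k mod (p - 1)) = 1 * g ^ (k mod (p - 1))] (mod p)"
    by (rule cong_mult) simp
  then show ?thesis by (simp add: cong_def flip: power_mult power_add)
qed

definition dlog :: "nat \<Rightarrow> nat" where
  "dlog u = inv_into {..<p-1} (\<lambda>i. g ^ i mod p) (u mod p)"

lemma dlog_mod [simp]: "dlog (u mod p) = dlog u"
  by (simp add: dlog_def)

lemma nonzero_in_powers: "u mod p \<noteq> 0 \<Longrightarrow> u mod p \<in> (\<lambda>i. g ^ i mod p) ` {..<p-1}"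
  using generator_bij p_gt_2 by (auto simp: bij_betw_def)

lemma dlog_lt: "u mod p \<noteq> 0 \<Longrightarrow> dlog u < p - 1"
  unfolding dlog_def using inv_into_into[OF nonzero_in_powers] by blast

lemma power_dlog: "u mod p \<noteq> 0 \<Longrightarrow> g ^ dlog u mod p = u mod p"
  unfolding dlog_def using f_inv_into_f[OF nonzero_in_powers] by blast

lemma dlog_power: "dlog (g ^ k) = k mod (p - 1)"
proof -
  have "dlog (g ^ k) = inv_into {..<p-1} (\<lambda>i. g ^ i mod p) (g ^ (k mod (p - 1)) mod p)"
    by (simp add: dlog_def power_g_mod[of k])
  also have "\<dots> = k mod (p - 1)"
    using generator_bij p_gt_2 unfolding bij_betw_def by (intro inv_into_f_f) auto
  finally show ?thesis .
qed

lemma dlog_mult: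
  assumes "u mod p \<noteq> 0" "v mod p \<noteq> 0"
  shows "dlog (u * v) = (dlog u + dlog v) mod (p - 1)"
proof -
  have "(u * v) mod p = ((u mod p) * (v mod p)) mod p" by (simp add: mod_mult_eq)
  also have "\<dots> = ((g ^ dlog u mod p) * (g ^ dlog v mod p)) mod p" using assms power_dlog by simp
  also have "\<dots> = g ^ (dlog u + dlog v) mod p" by (simp add: mod_mult_eq power_add)
  finally have "dlog ((u * v) mod p) = dlog (g ^ (dlog u + dlog v) mod p)" by simp
  then show ?thesis by (simp add: dlog_power)
qed

lemma power_g_nonzero: "g ^ k mod p \<noteq> 0"
proof
  assume "g ^ k mod p = 0"
  then have "p dvd g" using prime prime_dvd_power by auto
  then have "p dvd gcd p g" by simp
  moreover have "coprime p g" using primroot by (simp add: residue_primroot_def)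
  ultimately show False using p_gt_2 by simp
qed

lemma minus_one_square: "((p - 1) * (p - 1)) mod p = 1"
proof -
  have "(p - 1) * (p - 1) = 1 + p * (p - 2)"
    using p_gt_2 by (cases p) (auto simp: algebra_simps)
  then have "((p - 1) * (p - 1)) mod p = 1 mod p" by (metis mod_mult_self2)
  then show ?thesis using p_gt_2 by simp
qed

definition qclass :: "nat \<Rightarrow> nat" where
  "qclass u = dlog u mod 4"

lemma qclass_mod [simp]: "qclass (u mod p) = qclass u"
  by (simp add: qclass_def)

lemma qclass_lt: "qclass u < 4"
  by (simp add: qclass_def)

lemma qclass_mult:
  "u mod p \<noteq> 0 \<Longrightarrow> v mod p \<noteq> 0 \<Longrightarrow> qclass (u * v) = (qclass u + qclass v) mod 4"
  using dlog_mult four_dvd by (simp add: qclass_def mod_mod_cancel mod_add_eq)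

lemma qclass_power: "qclass (g ^ k) = k mod 4"
  using four_dvd by (simp add: qclass_def dlog_power mod_mod_cancel)

lemma qclass_one: "qclass 1 = 0"
  using qclass_power[of 0] by simp

(* -1 is a fourth power: its logarithm is (p-1)/2, and 8 divides p - 1. *)
lemma qclass_minus_one: "qclass (p - 1) = 0"
proof -
  define d where "d = dlog (p - 1)"
  have nz: "(p - 1) mod p \<noteq> 0" using p_gt_2 by simp
  have "(d + d) mod (p - 1) = dlog ((p - 1) * (p - 1))"
    using dlog_mult[OF nz nz] by (simp add: d_def)
  also have "\<dots> = dlog 1" by (metis dlog_mod minus_one_square)
  also have "\<dots> = 0" using dlog_power[of 0] by simp
  finally have "(p - 1) dvd 2 * d" by (simp add: mult_2 dvd_eq_mod_eq_0)
  moreover have "0 < d"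
  proof (rule ccontr)
    assume "\<not> 0 < d"
    then have "(p - 1) mod p = 1" using power_dlog[OF nz] p_gt_2 by (simp add: d_def)
    then show False using p_gt_2 by simp
  qed
  moreover have "d < p - 1" using dlog_lt[OF nz] by (simp add: d_def)
  moreover obtain k where k: "2 * d = (p - 1) * k" using calculation(1) by (auto elim: dvdE)
  ultimately have "0 < k" by (cases k) auto
  moreover have "k < 2"
  proof (rule ccontr)
    assume "\<not> k < 2"
    then have "(p - 1) * 2 \<le> (p - 1) * k" by simp
    then show False using k \<open>d < p - 1\<close> by linarith
  qed
  ultimately have "2 * d = p - 1" using k by simp
  then have "d mod 4 = 0" using eight_dvd by presburger
  then show ?thesis by (simp add: qclass_def d_def)
qed

lemma cyc_class_eq: assumes "j < 4" shows "cyc_class p g j = {u \<in> {0<..<p}. qclass u = j}"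
proof
  show "cyc_class p g j \<subseteq> {u \<in> {0<..<p}. qclass u = j}"
  proof
    fix b assume "b \<in> cyc_class p g j"
    then obtain k where b: "b = g ^ (4 * k + j) mod p" by (auto simp: cyc_class_def)
    then show "b \<in> {u \<in> {0<..<p}. qclass u = j}"
      using power_g_nonzero[of "4 * k + j"] qclass_power[of "4 * k + j"] assms p_gt_2 by simp
  qed
next
  show "{u \<in> {0<..<p}. qclass u = j} \<subseteq> cyc_class p g j"
  proof
    fix u assume u: "u \<in> {u \<in> {0<..<p}. qclass u = j}"
    then have "dlog u mod 4 = j" by (simp add: qclass_def)
    then have "dlog u = 4 * (dlog u div 4) + j" by (metis div_mult_mod_eq mult.commute)
    moreover have "g ^ dlog u mod p = u" using u power_dlog[of u] by simp
    ultimately have "u = g ^ (4 * (dlog u div 4) + j) mod p" by metis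
    then show "u \<in> cyc_class p g j" by (auto simp: cyc_class_def)
  qed
qed

definition f :: nat where "f = (p - 1) div 4"

lemma sum_mod_4: "(\<Sum>k<4 * n. F (k mod 4)) = of_nat n * (\<Sum>i<4. F i)"
proof (induction n)
  case (Suc n)
  have "4 * Suc n = Suc (Suc (Suc (Suc (4 * n))))" by simp
  moreover have "(4 * n) mod 4 = 0" "Suc (4 * n) mod 4 = 1" "Suc (Suc (4 * n)) mod 4 = 2"
    "Suc (Suc (Suc (4 * n))) mod 4 = 3" by presburger+
  ultimately have "(\<Sum>k<4 * Suc n. F (k mod 4)) = (\<Sum>k<4 * n. F (k mod 4)) + (\<Sum>i<4. F i)"
    by (simp only: sum.lessThan_Suc sum_lessThan_4 add.assoc)
  then show ?case using Suc.IH by (simp add: distrib_right add.commute)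
qed simp

lemma sum_qclass: "(\<Sum>u\<in>{0<..<p}. F (qclass u)) = of_nat f * (\<Sum>i<4. F i)"
proof -
  have "(\<Sum>u\<in>{0<..<p}. F (qclass u)) = (\<Sum>k<p-1. F (qclass (g ^ k mod p)))"
    using sum.reindex_bij_betw[OF generator_bij, of "\<lambda>u. F (qclass u)"] by simp
  also have "\<dots> = (\<Sum>k<4 * f. F (k mod 4))"
    using four_dvd by (simp add: qclass_power f_def)
  finally show ?thesis by (simp add: sum_mod_4)
qed

lemma card_qclass: "i < 4 \<Longrightarrow> card {u \<in> {0<..<p}. qclass u = i} = f"
  using sum_qclass[of "\<lambda>j. if j = i then 1 else 0 :: nat"]
  by (simp add: sum.If_cases Int_def conj_commute)

definition chi :: "nat \<Rightarrow> complex" where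
  "chi u = (if u mod p = 0 then 0 else \<i> ^ qclass u)"

lemma chi_mod [simp]: "chi (u mod p) = chi u"
  by (simp add: chi_def)

lemma chi_cong: "a mod p = b mod p \<Longrightarrow> chi a = chi b"
  by (metis chi_mod)

lemma chi_zero [simp]: "chi 0 = 0"
  by (simp add: chi_def)

lemma chi_one [simp]: "chi 1 = 1" "chi (Suc 0) = 1"
  using p_gt_2 qclass_one by (simp_all add: chi_def)

lemma power_i_mod_4: "\<i> ^ (n mod 4) = \<i> ^ n"
proof -
  have "\<i> ^ n = \<i> ^ (4 * (n div 4)) * \<i> ^ (n mod 4)"
    by (subst power_add [symmetric]) simp
  moreover have "\<i> ^ (4 * (n div 4)) = (1::complex)"
    by (simp add: power_mult power4_eq_xxxx)
  ultimately show ?thesis by simp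
qed

lemma chi_mult: "chi (u * v) = chi u * chi v"
proof (cases "u mod p = 0 \<or> v mod p = 0")
  case True
  then have "p dvd u * v" by auto
  then show ?thesis using True by (auto simp: chi_def)
next
  case False
  then have "chi (u * v) = \<i> ^ ((qclass u + qclass v) mod 4)"
    using nonzero_mod_mult qclass_mult by (simp add: chi_def)
  also have "\<dots> = \<i> ^ qclass u * \<i> ^ qclass v" by (simp only: power_i_mod_4 power_add)
  finally show ?thesis using False by (simp add: chi_def)
qed

lemma chi_unimodular: "u mod p \<noteq> 0 \<Longrightarrow> chi u * cnj (chi u) = 1"
  by (simp add: chi_def power_mult_distrib [symmetric])

lemma sum_nonzero_residues: "(\<Sum>u<p. F u) = F 0 + (\<Sum>u\<in>{0<..<p}. F u)"
proof -
  have "{..<p} = insert 0 {0<..<p}" using p_gt_2 by auto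
  then show ?thesis by simp
qed

(* chi and chi^2 are nontrivial characters, so their sums vanish. *)
lemma sum_chi_power: "k = 1 \<or> k = 2 \<Longrightarrow> (\<Sum>u<p. chi u ^ k) = 0"
proof -
  assume k: "k = 1 \<or> k = 2"
  have "(\<Sum>u<p. chi u ^ k) = (\<Sum>u\<in>{0<..<p}. (\<i> ^ qclass u) ^ k)"
    using k by (subst sum_nonzero_residues) (auto intro!: sum.cong simp: chi_def)
  also have "\<dots> = of_nat f * (\<Sum>i<4. (\<i> ^ i) ^ k)" by (rule sum_qclass)
  also have "(\<Sum>i<4::nat. (\<i> ^ i) ^ k) = (0::complex)"
    using k by (auto simp: sum_lessThan_4 eval_nat_numeral)
  finally show ?thesis by simp
qed

(* The inverse of a nonzero residue, u^(p-2) mod p by Fermat's little theorem. *)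
definition inv_mod :: "nat \<Rightarrow> nat" where
  "inv_mod u = u ^ (p - 2) mod p"

lemma inv_mod_mult: assumes "u mod p \<noteq> 0" shows "(u * inv_mod u) mod p = 1"
proof -
  have "[u ^ (p - 1) = 1] (mod p)"
    using assms fermat_theorem[OF prime, of u] by (simp add: dvd_eq_mod_eq_0)
  moreover have "p - 1 = Suc (p - 2)" using p_gt_2 by simp
  then have "u ^ (p - 1) = u * u ^ (p - 2)" by simp
  ultimately show ?thesis using p_gt_2 by (simp add: cong_def inv_mod_def mod_mult_right_eq)
qed

lemma inv_mod_lt: "inv_mod u < p"
  using p_gt_2 by (simp add: inv_mod_def)

lemma inv_mod_nonzero: assumes "u mod p \<noteq> 0" shows "inv_mod u mod p \<noteq> 0"
proof
  assume "inv_mod u mod p = 0"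
  then have "(u * inv_mod u) mod p = 0" by (simp add: mod_mult_right_eq [symmetric])
  then show False using inv_mod_mult[OF assms] by simp
qed

lemma inv_mod_unique:
  assumes "u mod p \<noteq> 0" "(u * v) mod p = 1" shows "v mod p = inv_mod u"
proof -
  have "(inv_mod u * (u * v)) mod p = inv_mod u"
    using assms(2) inv_mod_lt by (metis mod_mult_right_eq mult.right_neutral mod_less)
  moreover have "(inv_mod u * (u * v)) mod p = v mod p"
    using inv_mod_mult[OF assms(1)]
    by (metis mod_mult_left_eq mult.assoc mult.commute mult_1)
  ultimately show ?thesis by simp
qed

lemma inv_mod_inv_mod: "u mod p \<noteq> 0 \<Longrightarrow> inv_mod (inv_mod u) = u mod p"
  using inv_mod_unique[OF inv_mod_nonzero, of u u] inv_mod_mult[of u] by (simp add: mult.commute)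

lemma inv_mod_minus_one: "inv_mod (p - 1) = p - 1"
  using inv_mod_unique[of "p - 1" "p - 1"] minus_one_square p_gt_2 by simp

lemma inv_mod_reindex: "(\<Sum>u\<in>{0<..<p}. F (inv_mod u)) = (\<Sum>u\<in>{0<..<p}. F u)"
proof -
  have inv: "inv_mod (inv_mod u) = u \<and> inv_mod u \<in> {0<..<p}" if "u \<in> {0<..<p}" for u
    using that inv_mod_inv_mod[of u] inv_mod_nonzero[of u] inv_mod_lt[of u] by (auto intro: gr0I)
  show ?thesis by (rule sum.reindex_bij_witness[of _ inv_mod inv_mod]) (use inv in auto)
qed

lemma chi_inv_mod: assumes "u mod p \<noteq> 0" shows "chi (inv_mod u) = cnj (chi u)"
proof -
  have "chi u * chi (inv_mod u) = 1"
    using chi_mult[of u "inv_mod u"] chi_mod[of "u * inv_mod u"] inv_mod_mult[OF assms] by simp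
  then have "cnj (chi u) * (chi u * chi (inv_mod u)) = cnj (chi u)" by simp
  then show ?thesis using chi_unimodular[OF assms] by (simp add: mult.assoc [symmetric] mult.commute)
qed

lemma qclass_inv_mod: assumes "u mod p \<noteq> 0" shows "qclass (inv_mod u) = (4 - qclass u) mod 4"
proof -
  have "(qclass u + qclass (inv_mod u)) mod 4 = 0"
    using qclass_mult[OF assms inv_mod_nonzero[OF assms]] inv_mod_mult[OF assms] qclass_one
    by (metis qclass_mod)
  then show ?thesis
    using less_4_cases[OF qclass_lt[of u]] less_4_cases[OF qclass_lt[of "inv_mod u"]]
    by (elim disjE) simp_all
qed

(* Character sum over an affine image of the nonzero residues: the full sum of chi
   vanishes and the missing residue z = 0 contributes chi w. *)
lemma sum_chi_affine_nonzero:
  assumes "a mod p \<noteq> 0" shows "(\<Sum>z\<in>{0<..<p}. chi (w + a * z)) = - chi w"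
proof -
  have "chi w + (\<Sum>z\<in>{0<..<p}. chi (w + a * z)) = (\<Sum>z<p. chi ((a * z + w) mod p))"
    by (subst sum_nonzero_residues) (simp add: add.commute)
  also have "\<dots> = 0" using sum_affine_reindex[OF assms, of chi] sum_chi_power[of 1] by simp
  finally show ?thesis by (simp add: add_eq_0_iff)
qed

definition jacobi :: complex where
  "jacobi = (\<Sum>u<p. chi u * chi (u + 1))"

(* The inner sums arising when |J|^2 is expanded and the substitution u = v w is made. *)
definition jacobi_corr :: "nat \<Rightarrow> complex" where
  "jacobi_corr w = (\<Sum>v\<in>{0<..<p}. chi (w * v + 1) * cnj (chi (v + 1)))"

lemma jacobi_substitution:
  assumes v: "v \<in> {0<..<p}"
  shows "(\<Sum>u<p. chi u * chi (u + 1) * (cnj (chi v) * cnj (chi (v + 1))))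
       = (\<Sum>w<p. chi w * (chi (w * v + 1) * cnj (chi (v + 1))))"
proof -
  have nz: "v mod p \<noteq> 0" using v by simp
  let ?F = "\<lambda>u. chi u * chi (u + 1) * (cnj (chi v) * cnj (chi (v + 1)))"
  have "(\<Sum>u<p. ?F u) = (\<Sum>w<p. ?F ((v * w + 0) mod p))"
    using sum_affine_reindex[OF nz, of ?F 0] by simp
  also have "\<dots> = (\<Sum>w<p. chi w * (chi (w * v + 1) * cnj (chi (v + 1))))"
  proof (intro sum.cong refl)
    fix w
    have "chi ((v * w + 0) mod p + 1) = chi (w * v + 1)"
      by (rule chi_cong) (simp add: mod_Suc_eq mult.commute)
    then have "?F ((v * w + 0) mod p)
        = (chi v * cnj (chi v)) * (chi w * (chi (w * v + 1) * cnj (chi (v + 1))))"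
      by (simp add: chi_mult ac_simps)
    then show "?F ((v * w + 0) mod p) = chi w * (chi (w * v + 1) * cnj (chi (v + 1)))"
      using chi_unimodular[OF nz] by simp
  qed
  finally show ?thesis .
qed

lemma jacobi_norm_expansion: "jacobi * cnj jacobi = (\<Sum>w<p. chi w * jacobi_corr w)"
proof -
  have "jacobi * cnj jacobi
      = (\<Sum>u<p. \<Sum>v<p. chi u * chi (u + 1) * (cnj (chi v) * cnj (chi (v + 1))))"
    by (simp add: jacobi_def sum_product)
  also have "\<dots> = (\<Sum>v<p. \<Sum>u<p. chi u * chi (u + 1) * (cnj (chi v) * cnj (chi (v + 1))))"
    by (rule sum.swap)
  also have "\<dots> = (\<Sum>v\<in>{0<..<p}. \<Sum>u<p. chi u * chi (u + 1) * (cnj (chi v) * cnj (chi (v + 1))))"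
    by (subst sum_nonzero_residues) simp
  also have "\<dots> = (\<Sum>v\<in>{0<..<p}. \<Sum>w<p. chi w * (chi (w * v + 1) * cnj (chi (v + 1))))"
    by (intro sum.cong refl jacobi_substitution)
  also have "\<dots> = (\<Sum>w<p. \<Sum>v\<in>{0<..<p}. chi w * (chi (w * v + 1) * cnj (chi (v + 1))))"
    by (rule sum.swap)
  also have "\<dots> = (\<Sum>w<p. chi w * jacobi_corr w)"
    by (simp add: jacobi_corr_def sum_distrib_left)
  finally show ?thesis .
qed

(* The inner sums: jacobi_corr 1 = p - 2, and for w \<noteq> 0, 1 the substitutions v = y - 1
   and y = 1/z reduce jacobi_corr w + 1 to a character sum over an affine image. *)
lemma jacobi_corr_one: "jacobi_corr 1 = of_nat (p - 2)"
proof -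
  have "{0<..<p} = insert (p - 1) {0<..<p-1}" using p_gt_2 by auto
  moreover have "chi (p - 1 + 1) = 0" using p_gt_2 by (simp add: chi_def)
  moreover have "chi (v + 1) * cnj (chi (v + 1)) = 1" if "v \<in> {0<..<p-1}" for v
    using that by (intro chi_unimodular) (auto simp: less_diff_conv)
  ultimately show ?thesis using p_gt_2 by (simp add: jacobi_corr_def)
qed

lemma jacobi_corr_generic:
  assumes w: "w \<in> {2..<p}"
  shows "jacobi_corr w = - chi w - 1"
proof -
  define a where "a = w * (p - 1) + 1"
  have "a + (w - 1) = w * p"
    using w p_gt_2 unfolding a_def by (simp add: algebra_simps diff_mult_distrib2)
  then have "(a mod p + (w - 1)) mod p = 0" by (simp add: mod_add_left_eq)
  moreover have "0 < w - 1" "w - 1 < p" using w by auto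
  then have "(w - 1) mod p \<noteq> 0" by simp
  ultimately have a_nz: "a mod p \<noteq> 0" by (cases "a mod p = 0") auto
  let ?\<phi> = "\<lambda>v. chi (w * v + 1) * cnj (chi (v + 1))"
  have "jacobi_corr w + 1 = (\<Sum>v<p. ?\<phi> v)"
    by (subst sum_nonzero_residues) (simp add: jacobi_corr_def add.commute)
  also have "\<dots> = (\<Sum>y<p. ?\<phi> ((1 * y + (p - 1)) mod p))"
    using sum_affine_reindex[of 1 ?\<phi> "p - 1"] p_gt_2 by simp
  also have "\<dots> = (\<Sum>y<p. chi (w * (y + (p - 1)) + 1) * cnj (chi y))"
  proof (intro sum.cong refl)
    fix y
    have "chi (w * ((1 * y + (p - 1)) mod p) + 1) = chi (w * (y + (p - 1)) + 1)"
      by (rule chi_cong) (metis mod_Suc_eq mod_mult_right_eq add.commute plus_1_eq_Suc mult_1)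
    moreover have "chi ((1 * y + (p - 1)) mod p + 1) = chi y"
      using p_gt_2 by (intro chi_cong) (simp add: mod_Suc_eq)
    ultimately show "?\<phi> ((1 * y + (p - 1)) mod p) = chi (w * (y + (p - 1)) + 1) * cnj (chi y)"
      by simp
  qed
  also have "\<dots> = (\<Sum>y\<in>{0<..<p}. chi (w * (y + (p - 1)) + 1) * chi (inv_mod y))"
    by (subst sum_nonzero_residues) (auto intro!: sum.cong simp: chi_inv_mod)
  also have "\<dots> = (\<Sum>y\<in>{0<..<p}. chi (w + a * inv_mod y))"
  proof (intro sum.cong refl)
    fix y assume "y \<in> {0<..<p}"
    then have y: "(y * inv_mod y) mod p = 1" using inv_mod_mult by simp
    have "(w * (y + (p - 1)) + 1) * inv_mod y = w * (y * inv_mod y) + a * inv_mod y"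
      unfolding a_def by (simp add: algebra_simps)
    moreover have "(w * (y * inv_mod y) + a * inv_mod y) mod p
        = (w * ((y * inv_mod y) mod p) + a * inv_mod y) mod p"
      by (metis mod_add_left_eq mod_mult_right_eq)
    ultimately have "((w * (y + (p - 1)) + 1) * inv_mod y) mod p = (w + a * inv_mod y) mod p"
      using y by simp
    then show "chi (w * (y + (p - 1)) + 1) * chi (inv_mod y) = chi (w + a * inv_mod y)"
      by (subst chi_mult [symmetric]) (rule chi_cong)
  qed
  also have "\<dots> = - chi w"
    using inv_mod_reindex[of "\<lambda>z. chi (w + a * z)"] sum_chi_affine_nonzero[OF a_nz] by simp
  finally show ?thesis by (simp add: algebra_simps)
qed

(* |J|^2 = p: the terms w = 0, 1 contribute 0 and p - 2, the others - chi w^2 - chi w,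
   which sum to 2 because chi and chi^2 sum to zero. *)
lemma jacobi_norm: "jacobi * cnj jacobi = of_nat p"
proof -
  have split: "(\<Sum>w<p. F w) = F 0 + F 1 + (\<Sum>w\<in>{2..<p}. F w)" for F :: "nat \<Rightarrow> complex"
  proof -
    have "{..<p} = insert 0 (insert 1 {2..<p})" using p_gt_2 by auto
    then show ?thesis by (simp add: add.assoc)
  qed
  have sum_chi: "(\<Sum>w\<in>{2..<p}. chi w ^ k) = -1" if "k = 1 \<or> k = 2" for k
    using that sum_chi_power[OF that] split[of "\<lambda>w. chi w ^ k"] by (auto simp: add_eq_0_iff)
  have "(\<Sum>w\<in>{2..<p}. chi w * jacobi_corr w) = (\<Sum>w\<in>{2..<p}. - (chi w ^ 2) - chi w ^ 1)"
    by (intro sum.cong refl) (simp add: jacobi_corr_generic algebra_simps power2_eq_square)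
  also have "\<dots> = 2" using sum_chi[of 1] sum_chi[of 2] by (simp add: sum_subtractf sum_negf)
  finally have "(\<Sum>w\<in>{2..<p}. chi w * jacobi_corr w) = 2" .
  then show ?thesis
    using p_gt_2 jacobi_corr_one by (simp add: jacobi_norm_expansion split of_nat_diff)
qed

(* The cyclotomic numbers of order 4: (i, j) counts the u with u in G_i and u + 1 in G_j.
   Since -1 lies in G_0, the range u = p - 1 contributes nothing and is excluded. *)
definition cyclo :: "nat \<Rightarrow> nat \<Rightarrow> nat" where
  "cyclo i j = card {u \<in> {0<..<p-1}. qclass u = i \<and> qclass (u + 1) = j}"

lemma sum_consecutive_classes:
  fixes G :: "nat \<Rightarrow> nat \<Rightarrow> 'a::comm_semiring_1"
  shows "(\<Sum>u\<in>{0<..<p-1}. G (qclass u) (qclass (u + 1)))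
     = (\<Sum>i<4. \<Sum>j<4. of_nat (cyclo i j) * G i j)"
  unfolding cyclo_def
  by (rule sum_group_pairs4[where lbl = qclass and lbl' = "\<lambda>u. qclass (u + 1)"]) (auto simp: qclass_lt)

lemma card_cyc_class_pairs:
  assumes "0 < j" "j < 4"
  shows "card {b \<in> cyc_class p g 0. (b + 1) mod p \<in> cyc_class p g j} = cyclo 0 j"
proof -
  have "b \<in> {b \<in> cyc_class p g 0. (b + 1) mod p \<in> cyc_class p g j}
      \<longleftrightarrow> b \<in> {u \<in> {0<..<p-1}. qclass u = 0 \<and> qclass (u + 1) = j}" for b
  proof
    assume "b \<in> {b \<in> cyc_class p g 0. (b + 1) mod p \<in> cyc_class p g j}"
    then have b: "0 < b" "b < p" "qclass b = 0"
      and b1: "(b + 1) mod p \<in> {0<..<p}" "qclass ((b + 1) mod p) = j"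
      using cyc_class_eq[of 0] cyc_class_eq[OF assms(2)] by auto
    have "b \<noteq> p - 1" using b1 p_gt_2 by auto
    then show "b \<in> {u \<in> {0<..<p-1}. qclass u = 0 \<and> qclass (u + 1) = j}"
      using b b1 by simp
  next
    assume "b \<in> {u \<in> {0<..<p-1}. qclass u = 0 \<and> qclass (u + 1) = j}"
    then have b: "0 < b" "b < p - 1" "qclass b = 0" "qclass (b + 1) = j" by auto
    then have "(b + 1) mod p = b + 1" by simp
    then show "b \<in> {b \<in> cyc_class p g 0. (b + 1) mod p \<in> cyc_class p g j}"
      using b cyc_class_eq[of 0] cyc_class_eq[OF assms(2)] by auto
  qed
  then have "{b \<in> cyc_class p g 0. (b + 1) mod p \<in> cyc_class p g j}
      = {u \<in> {0<..<p-1}. qclass u = 0 \<and> qclass (u + 1) = j}" by blast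
  then show ?thesis by (simp add: cyclo_def)
qed

(* -1 lies in G_0, so u and -u lie in the same class. *)
lemma qclass_minus: assumes "0 < z" "z < p" shows "qclass (p - z) = qclass z"
proof -
  have "(p - 1) * z + z = p * z" using assms by (simp add: diff_mult_distrib)
  then have "[(p - 1) * z + z = (p - z) + z] (mod p)" using assms by (simp add: cong_def)
  then have "[(p - 1) * z = p - z] (mod p)" by (simp add: cong_add_rcancel_nat)
  then have "((p - 1) * z) mod p = (p - z) mod p" by (simp add: cong_def)
  then have "qclass (p - z) = qclass ((p - 1) * z)" by (metis qclass_mod)
  also have "\<dots> = qclass z"
    using qclass_mult[of "p - 1" z] assms p_gt_2 qclass_minus_one qclass_lt[of z] by simp
  finally show ?thesis .
qed

(* Symmetry (i, j) = (j, i), from the involution u \<mapsto> -1 - u. *)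
lemma cyclo_swap: "cyclo i j = cyclo j i"
proof -
  have le: "cyclo i j \<le> cyclo j i" for i j
    unfolding cyclo_def
  proof (rule card_inj_on_le[of "\<lambda>u. p - 1 - u"])
    show "inj_on (\<lambda>u. p - 1 - u) {u \<in> {0<..<p-1}. qclass u = i \<and> qclass (u + 1) = j}"
      by (rule inj_onI) auto
    show "(\<lambda>u. p - 1 - u) ` {u \<in> {0<..<p-1}. qclass u = i \<and> qclass (u + 1) = j}
        \<subseteq> {u \<in> {0<..<p-1}. qclass u = j \<and> qclass (u + 1) = i}"
    proof (rule image_subsetI)
      fix u assume "u \<in> {u \<in> {0<..<p-1}. qclass u = i \<and> qclass (u + 1) = j}"
      then have u: "0 < u" "u < p - 1" and "qclass u = i" "qclass (u + 1) = j" by auto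
      moreover have "qclass (p - (u + 1)) = qclass (u + 1)" "qclass (p - u) = qclass u"
        using u by (auto intro: qclass_minus)
      moreover have "p - 1 - u + 1 = p - u" "p - 1 - u = p - (u + 1)" using u by auto
      ultimately show "p - 1 - u \<in> {u \<in> {0<..<p-1}. qclass u = j \<and> qclass (u + 1) = i}"
        using u by auto
    qed
  qed simp
  show ?thesis using le[of i j] le[of j i] by simp
qed

lemma inv_mod_consecutive:
  assumes u: "u \<in> {0<..<p-1}"
  shows "inv_mod u \<in> {0<..<p-1}"
    and "qclass (inv_mod u + 1) = (qclass (inv_mod u) + qclass (u + 1)) mod 4"
proof -
  have nz: "u mod p \<noteq> 0" "(u + 1) mod p \<noteq> 0" using u by auto
  have y_nz: "inv_mod u mod p \<noteq> 0" by (rule inv_mod_nonzero[OF nz(1)])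
  have "inv_mod u \<noteq> p - 1"
    using inv_mod_inv_mod[OF nz(1)] inv_mod_minus_one u by auto
  then show "inv_mod u \<in> {0<..<p-1}"
    using y_nz inv_mod_lt[of u] by (auto intro: gr0I)
  have "inv_mod u * (u + 1) = u * inv_mod u + inv_mod u" by (simp add: algebra_simps)
  then have "(inv_mod u * (u + 1)) mod p = (inv_mod u + 1) mod p"
    using inv_mod_mult[OF nz(1)] by (metis mod_add_left_eq add.commute)
  then have "qclass (inv_mod u + 1) = qclass (inv_mod u * (u + 1))" by (metis qclass_mod)
  then show "qclass (inv_mod u + 1) = (qclass (inv_mod u) + qclass (u + 1)) mod 4"
    using qclass_mult[OF y_nz nz(2)] by simp
qed

(* Symmetry (i, j) = (-i, j - i), from the involution u \<mapsto> 1/u. *)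
lemma cyclo_inv:
  assumes "i < 4" "j < 4" shows "cyclo i j = cyclo ((4 - i) mod 4) ((j + 4 - i) mod 4)"
proof -
  have le: "cyclo i j \<le> cyclo ((4 - i) mod 4) ((j + 4 - i) mod 4)" if "i < 4" "j < 4" for i j
    unfolding cyclo_def
  proof (rule card_inj_on_le[of inv_mod])
    show "inj_on inv_mod {u \<in> {0<..<p-1}. qclass u = i \<and> qclass (u + 1) = j}"
    proof (rule inj_onI)
      fix u v assume "u \<in> {u \<in> {0<..<p-1}. qclass u = i \<and> qclass (u + 1) = j}"
        "v \<in> {u \<in> {0<..<p-1}. qclass u = i \<and> qclass (u + 1) = j}" "inv_mod u = inv_mod v"
      then have "u mod p \<noteq> 0" "v mod p \<noteq> 0" "u mod p = u" "v mod p = v" by auto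
      then show "u = v" using inv_mod_inv_mod \<open>inv_mod u = inv_mod v\<close> by metis
    qed
    show "inv_mod ` {u \<in> {0<..<p-1}. qclass u = i \<and> qclass (u + 1) = j}
        \<subseteq> {u \<in> {0<..<p-1}. qclass u = (4 - i) mod 4 \<and> qclass (u + 1) = (j + 4 - i) mod 4}"
    proof (rule image_subsetI)
      fix u assume "u \<in> {u \<in> {0<..<p-1}. qclass u = i \<and> qclass (u + 1) = j}"
      then have u: "0 < u" "u < p - 1" "qclass u = i" "qclass (u + 1) = j" by auto
      then have "qclass (inv_mod u) = (4 - i) mod 4" using qclass_inv_mod[of u] by simp
      moreover have "((4 - i) mod 4 + j) mod 4 = (j + 4 - i) mod 4"
        using less_4_cases[OF that(1)] by (elim disjE) simp_all
      ultimately show "inv_mod u \<in> {u \<in> {0<..<p-1}. qclass u = (4 - i) mod 4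
          \<and> qclass (u + 1) = (j + 4 - i) mod 4}"
        using inv_mod_consecutive[of u] u by simp
    qed
  qed simp
  have "(4 - (4 - i) mod 4) mod 4 = i"
    using less_4_cases[OF assms(1)] by (elim disjE) simp_all
  moreover have "((j + 4 - i) mod 4 + 4 - (4 - i) mod 4) mod 4 = j"
    using less_4_cases[OF assms(1)] less_4_cases[OF assms(2)] by (elim disjE) simp_all
  ultimately show ?thesis using le[OF assms] le[of "(4 - i) mod 4" "(j + 4 - i) mod 4"] by simp
qed

(* Row sums: G_i contains f elements, p - 1 among them when i = 0. *)
lemma cyclo_row: assumes "i < 4" shows "(\<Sum>j<4. cyclo i j) + (if i = 0 then 1 else 0) = f"
proof -
  let ?S = "{u \<in> {0<..<p-1}. qclass u = i}"
  have "(\<Sum>j<4. cyclo i j) = (\<Sum>j<4. \<Sum>u\<in>{x \<in> ?S. qclass (x + 1) = j}. (1::nat))"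
    unfolding cyclo_def by (intro sum.cong refl) (simp add: conj_assoc)
  also have "\<dots> = (\<Sum>u\<in>?S. 1)"
    by (rule sum.group) (auto simp: qclass_lt)
  also have "\<dots> = card ?S" by simp
  finally have "(\<Sum>j<4. cyclo i j) = card ?S" .
  moreover have "{u \<in> {0<..<p}. qclass u = i} = (if i = 0 then insert (p - 1) ?S else ?S)"
  proof (cases "i = 0")
    case True
    then show ?thesis using qclass_minus_one p_gt_2 by auto
  next
    case False
    have "x \<in> {u \<in> {0<..<p}. qclass u = i} \<longleftrightarrow> x \<in> ?S" for x
      using qclass_minus_one False by (cases "x = p - 1") auto
    then show ?thesis using False by auto
  qed
  moreover have "p - 1 \<notin> ?S" by simp
  ultimately show ?thesis using card_qclass[OF assms] by (simp split: if_splits)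
qed

lemma cyclo_table:
  assumes "i < 4" "j < 4"
  shows "cyclo i j = cyclotomic_table4 (cyclo 0 0) (cyclo 0 1) (cyclo 0 2) (cyclo 0 3) (cyclo 1 2) i j"
proof -
  have swap: "cyclo 1 0 = cyclo 0 1" "cyclo 2 0 = cyclo 0 2" "cyclo 3 0 = cyclo 0 3"
    "cyclo 2 1 = cyclo 1 2" "cyclo 3 1 = cyclo 1 3" "cyclo 3 2 = cyclo 2 3"
    by (rule cyclo_swap)+
  have "cyclo 1 1 = cyclo 3 0" "cyclo 1 3 = cyclo 3 2" "cyclo 2 3 = cyclo 2 1" "cyclo 2 2 = cyclo 2 0"
    "cyclo 3 3 = cyclo 1 0"
    using cyclo_inv[of 1 1] cyclo_inv[of 1 3] cyclo_inv[of 2 3] cyclo_inv[of 2 2] cyclo_inv[of 3 3]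
    by simp_all
  then have "cyclo 1 1 = cyclo 0 3" "cyclo 1 3 = cyclo 1 2" "cyclo 2 3 = cyclo 1 2"
    "cyclo 2 2 = cyclo 0 2" "cyclo 3 3 = cyclo 0 1" "cyclo 3 1 = cyclo 1 2" "cyclo 3 2 = cyclo 1 2"
    using swap by simp_all
  then show ?thesis
    using less_4_cases[OF assms(1)] less_4_cases[OF assms(2)] swap
    by (elim disjE) (simp_all add: cyclotomic_table4_def)
qed

lemma cyclo_rows:
  "cyclo 0 0 + cyclo 0 1 + cyclo 0 2 + cyclo 0 3 + 1 = f"
  "cyclo 0 1 + cyclo 0 3 + 2 * cyclo 1 2 = f"
  "2 * cyclo 0 2 + 2 * cyclo 1 2 = f"
  using cyclo_row[of 0] cyclo_row[of 1] cyclo_row[of 2]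
    cyclo_table[of 1 0] cyclo_table[of 1 1] cyclo_table[of 1 3]
    cyclo_table[of 2 0] cyclo_table[of 2 1] cyclo_table[of 2 2] cyclo_table[of 2 3]
  by (simp_all add: sum_lessThan_4 cyclotomic_table4_def)

(* The Jacobi sum in terms of cyclotomic numbers: chi(u) chi(u+1) = i^(i+j) on (i, j)-pairs. *)
lemma jacobi_cyclo: "jacobi = (\<Sum>i<4. \<Sum>j<4. of_nat (cyclo i j) * \<i> ^ (i + j))"
proof -
  have "{..<p} = insert 0 (insert (p - 1) {0<..<p-1})" using p_gt_2 by auto
  moreover have "chi (p - 1 + 1) = 0" using p_gt_2 by (simp add: chi_def)
  ultimately have "jacobi = (\<Sum>u\<in>{0<..<p-1}. chi u * chi (u + 1))"
    unfolding jacobi_def using p_gt_2 by simp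
  also have "\<dots> = (\<Sum>u\<in>{0<..<p-1}. \<i> ^ (qclass u + qclass (u + 1)))"
    by (intro sum.cong refl) (auto simp: chi_def power_add less_diff_conv)
  also have "\<dots> = (\<Sum>i<4. \<Sum>j<4. of_nat (cyclo i j) * \<i> ^ (i + j))"
    by (rule sum_consecutive_classes)
  finally show ?thesis .
qed

definition jacobi_re :: int where
  "jacobi_re = int (cyclo 0 0 + cyclo 1 3 + cyclo 2 2 + cyclo 3 1)
             - int (cyclo 0 2 + cyclo 2 0 + cyclo 1 1 + cyclo 3 3)"

definition jacobi_im :: int where
  "jacobi_im = int (cyclo 0 1 + cyclo 1 0 + cyclo 2 3 + cyclo 3 2)
             - int (cyclo 0 3 + cyclo 3 0 + cyclo 1 2 + cyclo 2 1)"

lemma jacobi_re_im: "jacobi = of_int jacobi_re + \<i> * of_int jacobi_im"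
proof -
  have "\<i> ^ 2 = -1" "\<i> ^ 3 = - \<i>" "\<i> ^ 4 = 1" "\<i> ^ 5 = \<i>" "\<i> ^ 6 = -1"
    by (simp_all add: eval_nat_numeral)
  then show ?thesis
    unfolding jacobi_cyclo sum_lessThan_4 jacobi_re_def jacobi_im_def by (simp add: algebra_simps)
qed

lemma jacobi_sum_two_squares: "jacobi_re^2 + jacobi_im^2 = int p"
proof -
  have "jacobi * cnj jacobi = of_int (jacobi_re^2 + jacobi_im^2)"
    by (simp add: jacobi_re_im algebra_simps power2_eq_square)
  then show ?thesis using jacobi_norm by (metis of_int_eq_iff of_int_of_nat_eq)
qed

lemma jacobi_im_cyclo: "jacobi_im = 2 * (int (cyclo 0 1) - int (cyclo 0 3))"
  using cyclo_table[of 1 0] cyclo_table[of 2 3] cyclo_table[of 3 2] cyclo_table[of 3 0]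
    cyclo_table[of 1 2] cyclo_table[of 2 1]
  by (simp add: jacobi_im_def cyclotomic_table4_def)

(* If p = s^2 + t^2 with s odd, t > 0, and (0,1) > (0,3), then jacobi_im = t: by uniqueness of
   the representation as a sum of two squares, parity decides between s and t, and the sign
   hypothesis fixes the sign. *)
lemma jacobi_im_eq:
  fixes s t :: int
  assumes p: "int p = s^2 + t^2" and s: "s mod 4 = 1" and t: "t > 0"
    and sign: "cyclo 0 3 < cyclo 0 1"
  shows "jacobi_im = t"
proof -
  have "prime (int p)" using prime by simp
  then have "jacobi_im^2 = t^2 \<or> jacobi_im^2 = s^2"
    using prime_sum_two_squares_unique[of "int p" jacobi_im jacobi_re t s] p
      jacobi_sum_two_squares by (simp add: add.commute)
  moreover have "jacobi_im^2 \<noteq> s^2"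
  proof
    assume "jacobi_im^2 = s^2"
    moreover have "even (jacobi_im^2)" using jacobi_im_cyclo by simp
    ultimately have "even s" by simp
    then show False using s by presburger
  qed
  ultimately have "jacobi_im^2 = t^2" by blast
  moreover have "jacobi_im > 0" using sign jacobi_im_cyclo by simp
  ultimately show ?thesis using t by (simp add: power2_eq_iff)
qed

(* Periodic autocorrelation of a sequence x that is constant on the cyclotomic classes
   (x = c on G_j) with x_0 = -1: substituting k = d u turns it into a sum over consecutive
   pairs (u, u + 1), which the cyclotomic numbers count. *)
lemma autocorrelation_cyclo:
  fixes x c :: "nat \<Rightarrow> complex"
  assumes x: "\<And>k. k \<in> {0<..<p} \<Longrightarrow> x k = c (qclass k)" and x0: "x 0 = -1"
    and d: "d \<in> {0<..<p}"
  shows "(\<Sum>k<p. x ((k + d) mod p) * cnj (x k)) =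
     - c (qclass d) - cnj (c (qclass d))
     + (\<Sum>i<4. \<Sum>j<4. of_nat (cyclo i j)
          * (c ((qclass d + j) mod 4) * cnj (c ((qclass d + i) mod 4))))"
proof -
  have d_nz: "d mod p \<noteq> 0" using d by simp
  define y where "y v = x ((d * v) mod p)" for v
  have y: "y v = c ((qclass d + qclass v) mod 4)" if "v mod p \<noteq> 0" for v
  proof -
    have "(d * v) mod p \<in> {0<..<p}" using nonzero_mod_mult[OF d_nz that] p_gt_2 by simp
    then show ?thesis using x qclass_mult[OF d_nz that] by (simp add: y_def)
  qed
  have "(\<Sum>k<p. x ((k + d) mod p) * cnj (x k)) = (\<Sum>u<p. y (u + 1) * cnj (y u))"
  proof -
    have "(\<Sum>k<p. x ((k + d) mod p) * cnj (x k))
        = (\<Sum>u<p. x (((d * u + 0) mod p + d) mod p) * cnj (x ((d * u + 0) mod p)))"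
      using sum_affine_reindex[OF d_nz, of "\<lambda>k. x ((k + d) mod p) * cnj (x k)" 0] by simp
    also have "\<dots> = (\<Sum>u<p. y (u + 1) * cnj (y u))"
      by (simp add: y_def mod_simps algebra_simps)
    finally show ?thesis .
  qed
  also have "\<dots> = y 1 * cnj (y 0) + y (p - 1 + 1) * cnj (y (p - 1))
      + (\<Sum>u\<in>{0<..<p-1}. y (u + 1) * cnj (y u))"
  proof -
    have "{..<p} = insert 0 (insert (p - 1) {0<..<p-1})" using p_gt_2 by auto
    then show ?thesis using p_gt_2 by (simp add: add.assoc)
  qed
  also have "y 0 = -1" using x0 by (simp add: y_def)
  also have "y (p - 1 + 1) = -1" using x0 p_gt_2 by (simp add: y_def)
  also have "y 1 = c (qclass d)" using y[of 1] p_gt_2 qclass_one qclass_lt[of d] by simp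
  also have "y (p - 1) = c (qclass d)"
    using y[of "p - 1"] p_gt_2 qclass_minus_one qclass_lt[of d] by simp
  also have "(\<Sum>u\<in>{0<..<p-1}. y (u + 1) * cnj (y u))
      = (\<Sum>u\<in>{0<..<p-1}. c ((qclass d + qclass (u + 1)) mod 4) * cnj (c ((qclass d + qclass u) mod 4)))"
    by (intro sum.cong refl) (auto simp: y less_diff_conv)
  also have "\<dots> = (\<Sum>i<4. \<Sum>j<4. of_nat (cyclo i j)
      * (c ((qclass d + j) mod 4) * cnj (c ((qclass d + i) mod 4))))"
    by (rule sum_consecutive_classes)
  finally show ?thesis by simp
qed

lemma perfect_autocorrelation:
  fixes x c :: "nat \<Rightarrow> complex" and a :: complex and t :: int
  assumes x: "\<And>k. k \<in> {0<..<p} \<Longrightarrow> x k = c (qclass k)" and x0: "x 0 = -1"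
    and c: "\<And>j. c j = [a, -a, cnj a, -cnj a] ! ((j + r) mod 4)"
    and a: "norm a = 1" "of_int t * (a - cnj a)^2 = 4 * (a + cnj a)"
    and t: "jacobi_im = t" and d: "d \<in> {0<..<p}"
  shows "(\<Sum>k<p. x ((k + d) mod p) * cnj (x k)) = -1"
proof -
  let ?n = "\<lambda>i j. of_nat (cyclo i j) :: complex"
  define A B C D E where "A = ?n 0 0" "B = ?n 0 1" "C = ?n 0 2" "D = ?n 0 3" "E = ?n 1 2"
  have table: "?n i j = cyclotomic_table4 A B C D E i j" if "i < 4" "j < 4" for i j
    using cyclo_table[OF that] cyclotomic_table4_map[OF that, of of_nat]
    by (simp add: A_B_C_D_E_def)
  have rows: "A + B + C + D + 1 = of_nat f" "B + D + 2 * E = of_nat f" "2 * C + 2 * E = of_nat f"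
    using cyclo_rows[THEN arg_cong[where f = "of_nat :: nat \<Rightarrow> complex"]]
    by (simp_all add: A_B_C_D_E_def ac_simps)
  have tBD: "2 * (B - D) = of_int t"
    using jacobi_im_cyclo[THEN arg_cong[where f = "of_int :: int \<Rightarrow> complex"]] t
    by (simp add: A_B_C_D_E_def)
  have sums: "(\<Sum>i<4. \<Sum>j<4. ?n i j * G i j)
      = (\<Sum>i<4. \<Sum>j<4. cyclotomic_table4 A B C D E i j * G i j)" for G :: "nat \<Rightarrow> nat \<Rightarrow> complex"
    by (intro sum.cong refl) (simp add: table)
  have "- c m - cnj (c m) + (\<Sum>i<4. \<Sum>j<4. ?n i j * (c ((m + j) mod 4) * cnj (c ((m + i) mod 4))))
      = -1" for m
    unfolding sums by (rule quartic_autocorrelation_identity[OF rows tBD unimodular_mult_cnj[OF a(1)] a(2) c])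
  then show ?thesis using autocorrelation_cyclo[where x = x and c = c, OF x x0 d] by simp
qed

lemma class_sequence_sum:
  fixes x c :: "nat \<Rightarrow> complex"
  assumes "\<And>k. k \<in> {0<..<p} \<Longrightarrow> x k = c (qclass k)"
  shows "(\<Sum>k<p. x k) = x 0 + of_nat f * (\<Sum>j<4. c j)"
  using assms sum_qclass[of c] by (simp add: sum_nonzero_residues)

end

theorem propositionC:
  fixes p g r :: nat and s t :: int and c :: "nat \<Rightarrow> complex" and a :: complex
    and x :: "nat \<Rightarrow> complex"
  assumes "prime p" and "p mod 8 = 1"
    and "int p = s ^ 2 + t ^ 2" and "s mod 4 = 1" and "t > 0"
    and "residue_primroot p g"
    and "card {b \<in> cyc_class p g 0. (b + 1) mod p \<in> cyc_class p g 1}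
         > card {b \<in> cyc_class p g 0. (b + 1) mod p \<in> cyc_class p g 3}"
    and "a = Complex ((1 - sqrt (1 + (real_of_int t)^2)) / real_of_int t)
                     (sqrt (-2 + 2 * sqrt (1 + (real_of_int t)^2)) / real_of_int t)"
    and "r < 4"
    and "\<And>j. c j = [a, -a, cnj a, -cnj a] ! ((j + r) mod 4)"
    and "\<And>j k. j < 4 \<Longrightarrow> k \<in> cyc_class p g j \<Longrightarrow> x k = c j"
    and "x 0 = - (of_nat (p - 1) / 4) * (c 0 + c 1 + c 2 + c 3) - 1"
  shows "complex_hadamard (p + 1) (bordered_circ p x)"
proof -
  interpret quartic_residues p g using assms(1,2,6) by unfold_locales
  have a: "norm a = 1" "of_int t * (a - cnj a)^2 = 4 * (a + cnj a)"
    using special_unit_properties[OF assms(5,8)] by auto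
  have c_norm: "norm (c j) = 1" and c_sum: "(\<Sum>j<4. c j) = 0" for j
    using quadruple_properties[OF assms(10)] a(1) by auto
  have x0: "x 0 = -1" using assms(12) c_sum by (simp add: sum_lessThan_4)
  have x: "x k = c (qclass k)" if "k \<in> {0<..<p}" for k
    using assms(11)[OF qclass_lt] cyc_class_eq[OF qclass_lt[of k]] that by simp
  have "jacobi_im = t"
    using jacobi_im_eq[OF assms(3,4,5)] assms(7) card_cyc_class_pairs[of 1] card_cyc_class_pairs[of 3]
    by simp
  show ?thesis
  proof (rule bordered_circ_hadamard)
    show "norm (x k) = 1" if "k < p" for k
      using x x0 c_norm that by (cases "k = 0") auto
    show "(\<Sum>k<p. x k) = -1" using class_sequence_sum[where x = x and c = c, OF x] x0 c_sum by simp
    show "(\<Sum>k<p. x ((k + d) mod p) * cnj (x k)) = -1" if "0 < d" "d < p" for d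
      using perfect_autocorrelation[where x = x and c = c, OF x x0 assms(10) a \<open>jacobi_im = t\<close>] that by simp
  qed (use p_gt_2 in simp)
qed

end
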